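(* Let $u,v\in F$ and let $\varphi$ be an endomorphism of $F$ such that $(u,v)\sim_{AC}(\varphi(u),\varphi(v))$. Then for all $u',v'\in F$, if $(u,v)\sim_{AC}(u',v')$ then $(u',v')\sim_{AC}(\varphi(u'),\varphi(v'))$.
   Context: $F=F(x,y)$ is the free group on $\{x,y\}$. The Andrews–Curtis (AC) moves on a pair $(r_1,r_2)\in F^2$ are: replace $r_i$ by $r_ir_j$ ($i\ne j$); replace $r_i$ by $r_i^{-1}$; replace $r_i$ by $w^{-1}r_iw$ for some $w\in F$. Two pairs are AC-equivalent, written $\sim_{AC}$, if one can be obtained from the other by a finite sequence of AC-moves. *)

theory Defs
  imports "HOL-Algebra.Group"
begin

text \<open>The free group F = F(x,y), realised as reduced words over the letters
x, y and their inverses.  A letter is a pair (inverted?, generator).\<close>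

datatype gen = X | Y

type_synonym letter = "bool \<times> gen"

fun inv_letter :: "letter \<Rightarrow> letter" where
  "inv_letter (b, g) = (\<not> b, g)"

fun reduced :: "letter list \<Rightarrow> bool" where
  "reduced (a # b # w) = (b \<noteq> inv_letter a \<and> reduced (b # w))"
| "reduced _ = True"

fun reduce :: "letter list \<Rightarrow> letter list" where
  "reduce [] = []"
| "reduce (a # w) = (case reduce w of
       [] \<Rightarrow> [a]
     | b # w' \<Rightarrow> (if b = inv_letter a then w' else a # b # w'))"

definition FG :: "letter list monoid" where
  "FG = \<lparr>carrier = {w. reduced w}, mult = (\<lambda>u v. reduce (u @ v)), one = []\<rparr>"

inductive ac_move :: "(letter list \<times> letter list) \<Rightarrow> (letter list \<times> letter list) \<Rightarrow> bool" where
  mult1: "\<lbrakk>r1 \<in> carrier FG; r2 \<in> carrier FG\<rbrakk> \<Longrightarrow> ac_move (r1, r2) (r1 \<otimes>\<^bsub>FG\<^esub> r2, r2)"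
| mult2: "\<lbrakk>r1 \<in> carrier FG; r2 \<in> carrier FG\<rbrakk> \<Longrightarrow> ac_move (r1, r2) (r1, r2 \<otimes>\<^bsub>FG\<^esub> r1)"
| inv1: "\<lbrakk>r1 \<in> carrier FG; r2 \<in> carrier FG\<rbrakk> \<Longrightarrow> ac_move (r1, r2) (inv\<^bsub>FG\<^esub> r1, r2)"
| inv2: "\<lbrakk>r1 \<in> carrier FG; r2 \<in> carrier FG\<rbrakk> \<Longrightarrow> ac_move (r1, r2) (r1, inv\<^bsub>FG\<^esub> r2)"
| conj1: "\<lbrakk>r1 \<in> carrier FG; r2 \<in> carrier FG; w \<in> carrier FG\<rbrakk> \<Longrightarrow>
            ac_move (r1, r2) (inv\<^bsub>FG\<^esub> w \<otimes>\<^bsub>FG\<^esub> r1 \<otimes>\<^bsub>FG\<^esub> w, r2)"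
| conj2: "\<lbrakk>r1 \<in> carrier FG; r2 \<in> carrier FG; w \<in> carrier FG\<rbrakk> \<Longrightarrow>
            ac_move (r1, r2) (r1, inv\<^bsub>FG\<^esub> w \<otimes>\<^bsub>FG\<^esub> r2 \<otimes>\<^bsub>FG\<^esub> w)"

definition ac_equiv :: "(letter list \<times> letter list) \<Rightarrow> (letter list \<times> letter list) \<Rightarrow> bool" where
  "ac_equiv = ac_move\<^sup>*\<^sup>*"

end

theory Submission
  imports Defs
begin

text \<open>AC-moves are invertible, so AC-equivalence is an equivalence relation, and an
  endomorphism \<open>\<phi>\<close> maps each AC-move on \<open>(r\<^sub>1, r\<^sub>2)\<close> to the same kind of move on
  \<open>(\<phi> r\<^sub>1, \<phi> r\<^sub>2)\<close>.  Hence \<open>(u', v') \<sim> (u, v) \<sim> (\<phi> u, \<phi> v) \<sim> (\<phi> u', \<phi> v')\<close>.\<close>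

fun cancel_cons :: "letter \<Rightarrow> letter list \<Rightarrow> letter list" where
  "cancel_cons a [] = [a]"
| "cancel_cons a (b # w) = (if b = inv_letter a then w else a # b # w)"

lemma reduce_Cons: "reduce (a # w) = cancel_cons a (reduce w)"
  by (simp split: list.split)

lemma inv_letter_inv_letter [simp]: "inv_letter (inv_letter a) = a"
  by (cases a) auto

lemma reduced_cancel_cons: "reduced w \<Longrightarrow> reduced (cancel_cons a w)"
  by (cases w rule: reduced.cases) auto

lemma reduced_reduce: "reduced (reduce w)"
  by (induction w) (auto simp: reduce_Cons reduced_cancel_cons simp del: reduce.simps(2))

lemma reduce_reduced: "reduced w \<Longrightarrow> reduce w = w"
  by (induction w rule: reduced.induct) (auto simp: reduce_Cons simp del: reduce.simps(2))

lemma reduce_append_reduce_right: "reduce (u @ reduce v) = reduce (u @ v)"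
  by (induction u) (auto simp: reduce_Cons reduce_reduced[OF reduced_reduce] simp del: reduce.simps(2))

lemma cancel_cons_inv_letter: "reduced w \<Longrightarrow> cancel_cons a (cancel_cons (inv_letter a) w) = w"
  by (cases w rule: reduced.cases) auto

lemma reduce_cancel_cons_append:
  assumes "reduced w"
  shows "reduce (cancel_cons a w @ v) = cancel_cons a (reduce (w @ v))"
proof (cases w)
  case (Cons b w')
  then show ?thesis
    using cancel_cons_inv_letter[OF reduced_reduce, of a "w' @ v"]
    by (auto simp: reduce_Cons simp del: reduce.simps(2))
qed (simp add: reduce_Cons del: reduce.simps(2))

lemma reduce_append_reduce_left: "reduce (reduce u @ v) = reduce (u @ v)"
proof (induction u)
  case Nil
  then show ?case by (simp add: reduce_append_reduce_right[of "[]", simplified])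
next
  case (Cons a u)
  have "reduce (reduce (a # u) @ v) = cancel_cons a (reduce (reduce u @ v))"
    by (simp add: reduce_Cons reduce_cancel_cons_append[OF reduced_reduce] del: reduce.simps(2))
  with Cons show ?case by (simp add: reduce_Cons del: reduce.simps(2))
qed

definition inverse_word :: "letter list \<Rightarrow> letter list" where
  "inverse_word w = rev (map inv_letter w)"

lemma reduce_inverse_word_append: "reduce (inverse_word w @ w) = []"
proof (induction w rule: rev_induct)
  case (snoc a w)
  have "reduce (inverse_word (w @ [a]) @ w @ [a])
      = cancel_cons (inv_letter a) (reduce (reduce (inverse_word w @ w) @ [a]))"
    by (simp add: inverse_word_def reduce_Cons reduce_append_reduce_left del: reduce.simps(2))
  with snoc show ?case by simp
qed (simp add: inverse_word_def)

lemma group_FG: "group FG"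
proof (rule groupI)
  fix x
  assume "x \<in> carrier FG"
  then show "\<one>\<^bsub>FG\<^esub> \<otimes>\<^bsub>FG\<^esub> x = x" by (simp add: FG_def reduce_reduced)
  show "\<exists>y\<in>carrier FG. y \<otimes>\<^bsub>FG\<^esub> x = \<one>\<^bsub>FG\<^esub>"
    by (rule bexI[of _ "reduce (inverse_word x)"])
       (simp_all add: FG_def reduce_append_reduce_left reduce_inverse_word_append reduced_reduce)
qed (simp_all add: FG_def reduced_reduce reduce_append_reduce_left reduce_append_reduce_right)

interpretation FG: group FG
  by (rule group_FG)

lemma (in group) conj_inv_conj:
  assumes "r \<in> carrier G" "w \<in> carrier G"
  shows "w \<otimes> (inv w \<otimes> r \<otimes> w) \<otimes> inv w = r"
  using assms by (simp add: m_assoc flip: m_assoc[of w])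

lemma ac_move_imp_ac_equiv_converse: "ac_move p q \<Longrightarrow> ac_equiv q p"
  unfolding ac_equiv_def
proof (induction rule: ac_move.induct)
  case (mult1 r1 r2)
  have "ac_move (r1 \<otimes>\<^bsub>FG\<^esub> r2, r2) (r1 \<otimes>\<^bsub>FG\<^esub> r2, inv\<^bsub>FG\<^esub> r2)"
    using mult1 by (intro ac_move.inv2) auto
  moreover have "ac_move (r1 \<otimes>\<^bsub>FG\<^esub> r2, inv\<^bsub>FG\<^esub> r2) (r1, inv\<^bsub>FG\<^esub> r2)"
    using ac_move.mult1[of "r1 \<otimes>\<^bsub>FG\<^esub> r2" "inv\<^bsub>FG\<^esub> r2"] mult1 by (simp add: FG.m_assoc)
  moreover have "ac_move (r1, inv\<^bsub>FG\<^esub> r2) (r1, r2)"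
    using ac_move.inv2[of r1 "inv\<^bsub>FG\<^esub> r2"] mult1 by simp
  ultimately show ?case
    by (meson converse_rtranclp_into_rtranclp rtranclp.rtrancl_refl)
next
  case (mult2 r1 r2)
  have "ac_move (r1, r2 \<otimes>\<^bsub>FG\<^esub> r1) (inv\<^bsub>FG\<^esub> r1, r2 \<otimes>\<^bsub>FG\<^esub> r1)"
    using mult2 by (intro ac_move.inv1) auto
  moreover have "ac_move (inv\<^bsub>FG\<^esub> r1, r2 \<otimes>\<^bsub>FG\<^esub> r1) (inv\<^bsub>FG\<^esub> r1, r2)"
    using ac_move.mult2[of "inv\<^bsub>FG\<^esub> r1" "r2 \<otimes>\<^bsub>FG\<^esub> r1"] mult2 by (simp add: FG.m_assoc)
  moreover have "ac_move (inv\<^bsub>FG\<^esub> r1, r2) (r1, r2)"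
    using ac_move.inv1[of "inv\<^bsub>FG\<^esub> r1" r2] mult2 by simp
  ultimately show ?case
    by (meson converse_rtranclp_into_rtranclp rtranclp.rtrancl_refl)
next
  case (inv1 r1 r2)
  then show ?case using ac_move.inv1[of "inv\<^bsub>FG\<^esub> r1" r2] by auto
next
  case (inv2 r1 r2)
  then show ?case using ac_move.inv2[of r1 "inv\<^bsub>FG\<^esub> r2"] by auto
next
  case (conj1 r1 r2 w)
  then show ?case
    using ac_move.conj1[of "inv\<^bsub>FG\<^esub> w \<otimes>\<^bsub>FG\<^esub> r1 \<otimes>\<^bsub>FG\<^esub> w" r2 "inv\<^bsub>FG\<^esub> w"]
    by (auto simp: FG.conj_inv_conj)
next
  case (conj2 r1 r2 w)
  then show ?case
    using ac_move.conj2[of r1 "inv\<^bsub>FG\<^esub> w \<otimes>\<^bsub>FG\<^esub> r2 \<otimes>\<^bsub>FG\<^esub> w" "inv\<^bsub>FG\<^esub> w"]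
    by (auto simp: FG.conj_inv_conj)
qed

lemma ac_equiv_sym: "ac_equiv p q \<Longrightarrow> ac_equiv q p"
  unfolding ac_equiv_def
proof (induction rule: rtranclp_induct)
  case (step q r)
  then show ?case
    using ac_move_imp_ac_equiv_converse[OF step(2)] unfolding ac_equiv_def by auto
qed simp

lemma ac_equiv_trans: "ac_equiv p q \<Longrightarrow> ac_equiv q r \<Longrightarrow> ac_equiv p r"
  unfolding ac_equiv_def by auto

lemma ac_move_hom:
  assumes "\<phi> \<in> hom FG FG" and "ac_move p q"
  shows "ac_move (\<phi> (fst p), \<phi> (snd p)) (\<phi> (fst q), \<phi> (snd q))"
proof -
  interpret group_hom FG FG \<phi>
    using assms(1) group_FG by (simp add: group_hom_def group_hom_axioms_def)
  from assms(2) show ?thesis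
    by induction (simp_all add: ac_move.intros)
qed

lemma ac_equiv_hom:
  assumes "\<phi> \<in> hom FG FG" and "ac_equiv p q"
  shows "ac_equiv (\<phi> (fst p), \<phi> (snd p)) (\<phi> (fst q), \<phi> (snd q))"
  using assms(2) unfolding ac_equiv_def
proof (induction rule: rtranclp_induct)
  case (step q r)
  then show ?case using ac_move_hom[OF assms(1) step(2)] by auto
qed simp

theorem lemma3:
  fixes u v :: "letter list" and \<phi> :: "letter list \<Rightarrow> letter list"
  assumes "u \<in> carrier FG" and "v \<in> carrier FG"
    and "\<phi> \<in> hom FG FG"
    and "ac_equiv (u, v) (\<phi> u, \<phi> v)"
  shows "\<forall>u' v'. u' \<in> carrier FG \<longrightarrow> v' \<in> carrier FG \<longrightarrow>
           ac_equiv (u, v) (u', v') \<longrightarrow> ac_equiv (u', v') (\<phi> u', \<phi> v')"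
proof (intro allI impI)
  fix u' v'
  assume "ac_equiv (u, v) (u', v')"
  then have "ac_equiv (u', v') (u, v)" and "ac_equiv (\<phi> u, \<phi> v) (\<phi> u', \<phi> v')"
    using ac_equiv_sym ac_equiv_hom[OF assms(3)] by fastforce+
  with assms(4) show "ac_equiv (u', v') (\<phi> u', \<phi> v')"
    by (meson ac_equiv_trans)
qed

end
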